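(* Let $R\to R'$ be a homomorphism of commutative Noetherian $\mathbb{Z}[\frac1p,\zeta_p]$-algebras and let $(\rho,V)$ be an $R[G_n]$-module of $\psi$-Whittaker type. Then $(\rho\otimes_RR',V\otimes_RR')$ is of $\psi$-Whittaker type and $\mathcal{W}(V\otimes_RR',\psi_{R'})=\mathcal{W}(V,\psi_R)\otimes_RR'$, i.e. the Whittaker model of $V\otimes_RR'$ is the image of $\mathcal{W}(V,\psi_R)\otimes_RR'$ under the natural identification $\mathrm{Ind}_{N_n}^{G_n}\psi_R\otimes_RR'\cong\mathrm{Ind}_{N_n}^{G_n}\psi_{R'}$.
   Context: Let $p$ be a prime, $q$ a power of $p$, $G_n=\mathrm{GL}_n(\mathbb{F}_q)$, $N_n$ the upper unipotent subgroup. Fix nontrivial $\psi:(\mathbb{F}_q,+)\to\mathbb{Z}[\frac1p,\zeta_p]^\times$; for an algebra $R$, $\psi_R$ is its image in $R^\times$, a character of $N_n$ via $u\mapsto\psi_R(\sum_iu_{i,i+1})$. $\mathrm{Ind}_{N_n}^{G_n}\psi_R=\{f:G_n\to R:f(ug)=\psi_R(u)f(g)\}$. An $R[G_n]$-module $V$ is of $\psi$-Whittaker type if its $(N_n,\psi_R)$-coinvariants $V_{N_n,\psi_R}$ (its $n$-th derivative) form a free $R$-module of rank one; then a generator $\lambda$ of $\mathrm{Hom}_R(V_{N_n,\psi_R},R)$ gives $V\to\mathrm{Ind}_{N_n}^{G_n}\psi_R$, $v\mapsto(g\mapsto\lambda(\overline{gv}))$, whose image (independent of $\lambda$) is the Whittaker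 model $\mathcal{W}(V,\psi_R)$. *)

theory Defs
  imports Complex_Main "HOL-Library.Poly_Mapping" "HOL-Library.Function_Algebras" "HOL-Computational_Algebra.Primes"
begin

type_synonym 'f mat = "nat \<Rightarrow> nat \<Rightarrow> 'f"

definition is_mat :: "nat \<Rightarrow> ('f::zero) mat \<Rightarrow> bool" where
  "is_mat n A \<longleftrightarrow> (\<forall>i j. \<not> (i < n \<and> j < n) \<longrightarrow> A i j = 0)"

definition mat_mult :: "nat \<Rightarrow> ('f::comm_semiring_1) mat \<Rightarrow> 'f mat \<Rightarrow> 'f mat" where
  "mat_mult n A B = (\<lambda>i j. if i < n \<and> j < n then (\<Sum>k<n. A i k * B k j) else 0)"

definition mat_one :: "nat \<Rightarrow> ('f::zero_neq_one) mat" where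
  "mat_one n = (\<lambda>i j. if i < n \<and> j < n \<and> i = j then 1 else 0)"

definition GL :: "nat \<Rightarrow> ('f::field) mat set" where
  "GL n = {A. is_mat n A \<and> (\<exists>B. is_mat n B \<and> mat_mult n A B = mat_one n \<and> mat_mult n B A = mat_one n)}"

definition unip :: "nat \<Rightarrow> ('f::field) mat set" where
  "unip n = {A. is_mat n A \<and> (\<forall>i<n. \<forall>j<n. (j < i \<longrightarrow> A i j = 0) \<and> (i = j \<longrightarrow> A i j = 1))}"

definition superdiag :: "nat \<Rightarrow> ('f::field) mat \<Rightarrow> 'f" where
  "superdiag n u = (\<Sum>i<n - 1. u i (Suc i))"

definition zeta :: "nat \<Rightarrow> complex" where
  "zeta p = cis (2 * pi / real p)"

definition Zp :: "nat \<Rightarrow> complex set" where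
  "Zp p = {(\<Sum>i<p. of_int (c i) * zeta p ^ i) / of_nat p ^ k | (c :: nat \<Rightarrow> int) (k :: nat). True}"

definition Zp_algebra :: "nat \<Rightarrow> (complex \<Rightarrow> 'r::comm_ring_1) \<Rightarrow> bool" where
  "Zp_algebra p \<iota> \<longleftrightarrow> \<iota> 1 = 1 \<and>
     (\<forall>x\<in>Zp p. \<forall>y\<in>Zp p. \<iota> (x + y) = \<iota> x + \<iota> y \<and> \<iota> (x * y) = \<iota> x * \<iota> y)"

definition add_char :: "nat \<Rightarrow> ('f::field \<Rightarrow> complex) \<Rightarrow> bool" where
  "add_char p \<psi> \<longleftrightarrow> (\<forall>a. \<psi> a \<in> Zp p \<and> (\<exists>b\<in>Zp p. \<psi> a * b = 1)) \<and>
     (\<forall>a b. \<psi> (a + b) = \<psi> a * \<psi> b) \<and> (\<exists>a. \<psi> a \<noteq> 1)"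

definition ring_hom :: "('r::comm_ring_1 \<Rightarrow> 's::comm_ring_1) \<Rightarrow> bool" where
  "ring_hom \<phi> \<longleftrightarrow> \<phi> 1 = 1 \<and> (\<forall>x y. \<phi> (x + y) = \<phi> x + \<phi> y \<and> \<phi> (x * y) = \<phi> x * \<phi> y)"

definition ring_ideal :: "('r::comm_ring_1) set \<Rightarrow> bool" where
  "ring_ideal I \<longleftrightarrow> 0 \<in> I \<and> (\<forall>x\<in>I. \<forall>y\<in>I. x + y \<in> I) \<and> (\<forall>r. \<forall>x\<in>I. r * x \<in> I)"

definition noetherian_ring :: "('r::comm_ring_1) itself \<Rightarrow> bool" where
  "noetherian_ring _ \<longleftrightarrow> (\<forall>I :: nat \<Rightarrow> 'r set.
      (\<forall>k. ring_ideal (I k)) \<and> (\<forall>k. I k \<subseteq> I (Suc k)) \<longrightarrow> (\<exists>N. \<forall>k\<ge>N. I k = I N))"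

definition RG_module :: "nat \<Rightarrow> ('r::comm_ring_1 \<Rightarrow> 'v::ab_group_add \<Rightarrow> 'v)
    \<Rightarrow> (('f::field) mat \<Rightarrow> 'v \<Rightarrow> 'v) \<Rightarrow> bool" where
  "RG_module n scale act \<longleftrightarrow> module scale \<and>
     (\<forall>g\<in>GL n. module_hom scale scale (act g)) \<and>
     act (mat_one n) = id \<and>
     (\<forall>g\<in>GL n. \<forall>h\<in>GL n. act (mat_mult n g h) = act g \<circ> act h)"

text \<open>For a module M and a submodule K (M/K being the module of interest), the
  preimage in M of the kernel of M/K -> (M/K)_{N_n,chi}: K + span{u v - chi(u) v}.\<close>
definition coinv_rel :: "nat \<Rightarrow> ('r::comm_ring_1 \<Rightarrow> 'v::ab_group_add \<Rightarrow> 'v)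
    \<Rightarrow> (('f::field) mat \<Rightarrow> 'v \<Rightarrow> 'v) \<Rightarrow> ('f \<Rightarrow> 'r) \<Rightarrow> 'v set \<Rightarrow> 'v set" where
  "coinv_rel n scale act \<chi> K = module.span scale
     (K \<union> {act u v - scale (\<chi> (superdiag n u)) v | u v. u \<in> unip n})"

text \<open>A generator of Hom_R((M/K)_{N_n,chi}, R) when this coinvariant module is free of
  rank one, i.e. an R-linear isomorphism (M/K)_{N_n,chi} -> R, viewed as a map on M.\<close>
definition whittaker_functional :: "nat \<Rightarrow> ('r::comm_ring_1 \<Rightarrow> 'v::ab_group_add \<Rightarrow> 'v)
    \<Rightarrow> (('f::field) mat \<Rightarrow> 'v \<Rightarrow> 'v) \<Rightarrow> ('f \<Rightarrow> 'r) \<Rightarrow> 'v set \<Rightarrow> ('v \<Rightarrow> 'r) \<Rightarrow> bool" where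
  "whittaker_functional n scale act \<chi> K lam \<longleftrightarrow>
     module_hom scale (*) lam \<and> surj lam \<and> {v. lam v = 0} = coinv_rel n scale act \<chi> K"

text \<open>M/K is of chi-Whittaker type: its (N_n,chi)-coinvariants are free of rank one.\<close>
definition whittaker_type :: "nat \<Rightarrow> ('r::comm_ring_1 \<Rightarrow> 'v::ab_group_add \<Rightarrow> 'v)
    \<Rightarrow> (('f::field) mat \<Rightarrow> 'v \<Rightarrow> 'v) \<Rightarrow> ('f \<Rightarrow> 'r) \<Rightarrow> 'v set \<Rightarrow> bool" where
  "whittaker_type n scale act \<chi> K \<longleftrightarrow> (\<exists>lam. whittaker_functional n scale act \<chi> K lam)"

text \<open>Whittaker model: image of v |-> (g |-> lam(g v)) in Ind; functions on G_n,
  extended by 0 outside G_n.\<close>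
definition whittaker_model :: "nat \<Rightarrow> (('f::field) mat \<Rightarrow> 'v \<Rightarrow> 'v) \<Rightarrow> ('v \<Rightarrow> 'r::zero)
    \<Rightarrow> ('f mat \<Rightarrow> 'r) set" where
  "whittaker_model n act lam = {(\<lambda>g. if g \<in> GL n then lam (act g v) else 0) | v. True}"

definition free_scale :: "'s::comm_ring_1 \<Rightarrow> ('v \<Rightarrow>\<^sub>0 's) \<Rightarrow> ('v \<Rightarrow>\<^sub>0 's)" where
  "free_scale r x = Poly_Mapping.map (\<lambda>a. r * a) x"

definition free_act :: "('g \<Rightarrow> 'v \<Rightarrow> 'v) \<Rightarrow> 'g \<Rightarrow> ('v \<Rightarrow>\<^sub>0 's::comm_ring_1) \<Rightarrow> ('v \<Rightarrow>\<^sub>0 's)" where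
  "free_act act g x = (\<Sum>v\<in>Poly_Mapping.keys x. Poly_Mapping.single (act g v) (Poly_Mapping.lookup x v))"

text \<open>Relations defining V \<otimes>_R R' = F/K, F the free R'-module on V.\<close>
definition tensor_rel :: "('r::comm_ring_1 \<Rightarrow> 'v::ab_group_add \<Rightarrow> 'v) \<Rightarrow> ('r \<Rightarrow> 's::comm_ring_1)
    \<Rightarrow> ('v \<Rightarrow>\<^sub>0 's) set" where
  "tensor_rel scale \<phi> = module.span free_scale
     ({Poly_Mapping.single (v + w) 1 - Poly_Mapping.single v 1 - Poly_Mapping.single w 1 | v w. True}
      \<union> {Poly_Mapping.single (scale r v) 1 - Poly_Mapping.single v (\<phi> r) | r v. True})"

text \<open>Image of W(V,psi_R) \<otimes>_R R' in Ind psi_{R'}: R'-span of the phi o f.\<close>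
definition base_change_model :: "('r \<Rightarrow> 's::comm_ring_1) \<Rightarrow> ('g \<Rightarrow> 'r) set \<Rightarrow> ('g \<Rightarrow> 's) set" where
  "base_change_model \<phi> W = module.span (\<lambda>r f. \<lambda>g. r * f g) {(\<lambda>g. \<phi> (f g)) | f. f \<in> W}"

end

theory Submission
  imports Defs
begin

(*
  Write F for the free R'-module on V, so that V (x)_R R' = F/K with K = tensor_rel.
  A Whittaker functional lam of V extends R'-linearly to L : F -> R', v |-> phi (lam v);
  L is surjective and kills K and the relations u x - psi(u) x. Conversely, if lam e = 1
  then v - lam(v) e lies in the relation module of V, so modulo K and the twisted relations
  every x in F is congruent to L(x) (e (x) 1): the kernel of L is exactly the relation
  module of V (x) R', i.e. the coinvariants commute with base change. Two Whittaker
  functionals differ by a unit, so the Whittaker model does not depend on the choice, and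
  for L the Whittaker function of v (x) 1 is phi o W_v, which gives the model identity.
*)

abbreviation free_gen :: "'v \<Rightarrow> ('v \<Rightarrow>\<^sub>0 's::comm_ring_1)" where
  "free_gen v \<equiv> Poly_Mapping.single v 1"

definition free_lift :: "('s::comm_ring_1 \<Rightarrow> 'm \<Rightarrow> 'm) \<Rightarrow> ('v \<Rightarrow> 'm::ab_group_add)
    \<Rightarrow> ('v \<Rightarrow>\<^sub>0 's) \<Rightarrow> 'm" where
  "free_lift s f x = (\<Sum>v\<in>Poly_Mapping.keys x. s (Poly_Mapping.lookup x v) (f v))"

lemma ring_hom_zero: "ring_hom \<phi> \<Longrightarrow> \<phi> 0 = 0"
  unfolding ring_hom_def by (metis add_cancel_right_right add_0)

lemma module_mult: "module ((*) :: 's::comm_ring_1 \<Rightarrow> 's \<Rightarrow> 's)"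
  by unfold_locales (auto simp: algebra_simps)

lemma module_pointwise_mult: "module ((\<lambda>r f g. r * f g) :: 's::comm_ring_1 \<Rightarrow> ('g \<Rightarrow> 's) \<Rightarrow> _)"
  by unfold_locales (auto simp: algebra_simps plus_fun_def)

lemma module_hom_eq_mult_if_kernel_subset:
  assumes f: "module_hom s (*) f" and h: "module_hom s (*) h"
    and ker: "{x. f x = 0} \<subseteq> {x. h x = 0}" and e: "f e = 1"
  shows "h x = f x * h e"
proof -
  interpret f: module_hom s "(*)" f by (rule f)
  interpret h: module_hom s "(*)" h by (rule h)
  have "f (x - s (f x) e) = 0"
    using e by (simp add: f.diff f.scale)
  then have "h (x - s (f x) e) = 0"
    using ker by blast
  then show ?thesis
    by (simp add: h.diff h.scale)
qed

lemma lookup_free_scale: "Poly_Mapping.lookup (free_scale r x) v = r * Poly_Mapping.lookup x v"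
  unfolding free_scale_def by transfer (simp add: when_def)

lemma free_scale_single: "free_scale r (Poly_Mapping.single v a) = Poly_Mapping.single v (r * a)"
  unfolding free_scale_def by simp

lemma module_free_scale: "module (free_scale :: 's::comm_ring_1 \<Rightarrow> ('v \<Rightarrow>\<^sub>0 's) \<Rightarrow> _)"
  by unfold_locales (auto intro!: poly_mapping_eqI simp: lookup_free_scale lookup_add algebra_simps)

lemma span_free_gen: "module.span free_scale (range free_gen) = (UNIV :: ('v \<Rightarrow>\<^sub>0 's::comm_ring_1) set)"
proof -
  interpret F: module "free_scale :: 's \<Rightarrow> ('v \<Rightarrow>\<^sub>0 's) \<Rightarrow> _" by (rule module_free_scale)
  have "x \<in> F.span (range free_gen)" for x :: "'v \<Rightarrow>\<^sub>0 's"
  proof -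
    have "x = (\<Sum>v\<in>Poly_Mapping.keys x. free_scale (Poly_Mapping.lookup x v) (free_gen v))"
      by (rule poly_mapping_eqI)
        (auto simp: free_scale_single lookup_sum lookup_single when_def in_keys_iff)
    also have "\<dots> \<in> F.span (range free_gen)"
      by (intro F.span_sum F.span_scale F.span_base) blast
    finally show ?thesis .
  qed
  then show ?thesis by blast
qed

lemma free_module_hom_eqI:
  fixes f h :: "('v \<Rightarrow>\<^sub>0 's::comm_ring_1) \<Rightarrow> 'm::ab_group_add"
  assumes "module_hom free_scale s f" "module_hom free_scale s h"
    and "\<And>v. f (free_gen v) = h (free_gen v)"
  shows "f = h"
proof
  fix x
  interpret module_pair "free_scale :: 's \<Rightarrow> ('v \<Rightarrow>\<^sub>0 's) \<Rightarrow> _" s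
    using assms(1) by (simp add: module_pair_def module_hom_iff)
  show "f x = h x"
    using assms span_free_gen by (auto intro: module_hom_eq_on_span[of f h "range free_gen"])
qed

lemma free_lift_eq_sum_superset:
  assumes "module s" "finite A" "Poly_Mapping.keys x \<subseteq> A"
  shows "free_lift s f x = (\<Sum>v\<in>A. s (Poly_Mapping.lookup x v) (f v))"
proof -
  interpret module s by fact
  show ?thesis
    unfolding free_lift_def using assms(2,3)
    by (intro sum.mono_neutral_left) (auto simp: in_keys_iff)
qed

lemma free_lift_single: "module s \<Longrightarrow> free_lift s f (Poly_Mapping.single v a) = s a (f v)"
  by (subst free_lift_eq_sum_superset[of s "{v}"]) (auto simp: module.scale_zero_left)

lemma module_hom_free_lift:
  assumes "module s"
  shows "module_hom free_scale s (free_lift s f)"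
proof -
  interpret module s by fact
  have "free_lift s f (x + y) = free_lift s f x + free_lift s f y" for x y
  proof -
    let ?A = "Poly_Mapping.keys x \<union> Poly_Mapping.keys y"
    have "free_lift s f (x + y) = (\<Sum>v\<in>?A. s (Poly_Mapping.lookup (x + y) v) (f v))"
      using keys_add[of x y] by (intro free_lift_eq_sum_superset assms) auto
    also have "\<dots> = (\<Sum>v\<in>?A. s (Poly_Mapping.lookup x v) (f v))
        + (\<Sum>v\<in>?A. s (Poly_Mapping.lookup y v) (f v))"
      by (simp add: lookup_add scale_left_distrib sum.distrib)
    also have "\<dots> = free_lift s f x + free_lift s f y"
      by (simp add: free_lift_eq_sum_superset[OF assms, symmetric])
    finally show ?thesis .
  qed
  moreover have "free_lift s f (free_scale r x) = s r (free_lift s f x)" for r x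
  proof -
    have "free_lift s f (free_scale r x)
        = (\<Sum>v\<in>Poly_Mapping.keys x. s (Poly_Mapping.lookup (free_scale r x) v) (f v))"
      by (intro free_lift_eq_sum_superset assms) (auto simp: in_keys_iff lookup_free_scale)
    then show ?thesis
      by (simp add: free_lift_def lookup_free_scale scale_sum_right)
  qed
  ultimately show ?thesis
    using assms module_free_scale by (simp add: module_hom_iff)
qed

lemma free_lift_mult_left: "free_lift (*) (\<lambda>v. c * f v) x = c * free_lift (*) f x"
  unfolding free_lift_def sum_distrib_left by (simp add: mult.left_commute)

lemma free_lift_pointwise_apply:
  fixes F :: "'v \<Rightarrow> 'g \<Rightarrow> 's::comm_ring_1"
  shows "free_lift (\<lambda>r f g. r * f g) F x g = free_lift (*) (\<lambda>v. F v g) x"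
proof -
  have "(\<Sum>v\<in>A. (\<lambda>g. h v g)) g = (\<Sum>v\<in>A. h v g)" for A and h :: "'v \<Rightarrow> 'g \<Rightarrow> 's::comm_ring_1"
    by (induction A rule: infinite_finite_induct) auto
  then show ?thesis
    unfolding free_lift_def .
qed

lemma free_act_eq_free_lift: "free_act act g = free_lift free_scale (\<lambda>v. free_gen (act g v))"
  by (auto simp: fun_eq_iff free_act_def free_lift_def free_scale_single)

lemma free_act_single: "free_act act g (Poly_Mapping.single v a) = Poly_Mapping.single (act g v) a"
  by (simp add: free_act_eq_free_lift free_lift_single module_free_scale free_scale_single)

lemma module_hom_free_act: "module_hom free_scale free_scale (free_act act g)"
  unfolding free_act_eq_free_lift by (rule module_hom_free_lift[OF module_free_scale])

lemma free_lift_free_act: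
  assumes "module s"
  shows "free_lift s f (free_act act g x) = free_lift s (\<lambda>v. f (act g v)) x"
proof -
  have "free_lift s f \<circ> free_act act g = free_lift s (\<lambda>v. f (act g v))"
  proof (rule free_module_hom_eqI)
    show "module_hom free_scale s (free_lift s f \<circ> free_act act g)"
      by (rule module_hom_compose[OF module_hom_free_act
            module_hom_free_lift[OF assms]])
  qed (simp_all add: assms module_hom_free_lift free_act_single free_lift_single module.scale_one)
  then show ?thesis
    by (metis comp_apply)
qed

lemma subspace_coinv_rel: "module s \<Longrightarrow> module.subspace s (coinv_rel n s act \<chi> K)"
  unfolding coinv_rel_def by (rule module.subspace_span)

lemma subset_coinv_rel: "module s \<Longrightarrow> K \<subseteq> coinv_rel n s act \<chi> K"
  unfolding coinv_rel_def by (blast intro: module.span_base)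

lemma twisted_in_coinv_rel:
  "module s \<Longrightarrow> u \<in> unip n \<Longrightarrow> act u v - s (\<chi> (superdiag n u)) v \<in> coinv_rel n s act \<chi> K"
  unfolding coinv_rel_def by (blast intro: module.span_base)

lemma whittaker_functional_unip:
  assumes "whittaker_functional n s act \<chi> K lam" "u \<in> unip n"
  shows "lam (act u v) = \<chi> (superdiag n u) * lam v"
proof -
  interpret lam: module_hom s "(*)" lam
    using assms(1) unfolding whittaker_functional_def by blast
  have "lam (act u v - s (\<chi> (superdiag n u)) v) = 0"
    using assms twisted_in_coinv_rel[OF lam.m1.module_axioms]
    unfolding whittaker_functional_def by blast
  then show ?thesis
    by (simp add: lam.diff lam.scale)
qed

lemma whittaker_model_indep:
  assumes lam: "whittaker_functional n s act \<chi> K lam"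
    and lam': "whittaker_functional n s act \<chi> K lam'"
    and act_scale: "\<And>g c x. act g (s c x) = s c (act g x)"
  shows "whittaker_model n act lam' = whittaker_model n act lam"
proof -
  interpret lam: module_hom s "(*)" lam
    using lam unfolding whittaker_functional_def by blast
  have lam_hom: "module_hom s (*) lam" and lam'_hom: "module_hom s (*) lam'"
    and ker: "{x. lam x = 0} = {x. lam' x = 0}" and "surj lam" "surj lam'"
    using lam lam' unfolding whittaker_functional_def by auto
  then obtain e y where e: "lam e = 1" and "lam' y = 1"
    by (metis surjD)
  define c where "c = lam' e"
  have factor: "lam' x = lam x * c" for x
    unfolding c_def using ker e
    by (intro module_hom_eq_mult_if_kernel_subset[OF lam_hom lam'_hom]) auto
  then have unit: "lam y * c = 1"
    using \<open>lam' y = 1\<close> by simp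
  have "lam' (act g x) = lam (act g (s c x))" for g x
    by (simp add: factor act_scale lam.scale mult.commute)
  moreover have "lam (act g x) = lam' (act g (s (lam y) x))" for g x
    using unit by (simp add: factor act_scale lam.scale mult_ac)
  ultimately show ?thesis
    unfolding whittaker_model_def by (auto; metis)
qed

lemma whittaker_model_free_lift:
  fixes \<phi> :: "'r::comm_ring_1 \<Rightarrow> 's::comm_ring_1" and act :: "'f::field mat \<Rightarrow> 'v \<Rightarrow> 'v"
  assumes "ring_hom \<phi>"
  shows "whittaker_model n (free_act act) (free_lift (*) (\<lambda>v. \<phi> (lam v)))
    = base_change_model \<phi> (whittaker_model n act lam)"
proof -
  let ?s = "(\<lambda>r f g. r * f g) :: 's \<Rightarrow> ('f mat \<Rightarrow> 's) \<Rightarrow> _"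
  interpret F: module "free_scale :: 's \<Rightarrow> ('v \<Rightarrow>\<^sub>0 's) \<Rightarrow> _" by (rule module_free_scale)
  interpret BC: module ?s by (rule module_pointwise_mult)
  define W where "W v = (\<lambda>g. if g \<in> GL n then lam (act g v) else 0)" for v
  let ?\<Phi> = "\<lambda>v g. \<phi> (W v g)"
  have "(\<lambda>g. if g \<in> GL n then free_lift (*) (\<lambda>v. \<phi> (lam v)) (free_act act g x) else 0)
      = free_lift ?s ?\<Phi> x" for x
    by (auto simp: fun_eq_iff free_lift_pointwise_apply free_lift_free_act[OF module_mult]
        W_def ring_hom_zero[OF assms] free_lift_def[of "(*)" "\<lambda>v. 0"])
  then have "whittaker_model n (free_act act) (free_lift (*) (\<lambda>v. \<phi> (lam v)))
      = free_lift ?s ?\<Phi> ` F.span (range free_gen)"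
    unfolding whittaker_model_def span_free_gen by auto
  also have "\<dots> = BC.span (free_lift ?s ?\<Phi> ` range free_gen)"
    by (rule module_hom.span_image[symmetric, OF module_hom_free_lift[OF module_pointwise_mult]])
  also have "free_lift ?s ?\<Phi> ` range free_gen = range ?\<Phi>"
    by (simp add: image_image free_lift_single module_pointwise_mult)
  also have "range ?\<Phi> = {(\<lambda>g. \<phi> (f g)) | f. f \<in> whittaker_model n act lam}"
    unfolding whittaker_model_def W_def by auto
  finally show ?thesis
    unfolding base_change_model_def .
qed

lemma free_gen_add_in_tensor_rel: "free_gen (v + w) - free_gen v - free_gen w \<in> tensor_rel scale \<phi>"
  unfolding tensor_rel_def by (blast intro: module.span_base[OF module_free_scale])

lemma free_gen_scale_in_tensor_rel:
  "free_gen (scale r v) - free_scale (\<phi> r) (free_gen v) \<in> tensor_rel scale \<phi>"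
  unfolding tensor_rel_def free_scale_single mult_1_right
  by (blast intro: module.span_base[OF module_free_scale])

lemma subspace_free_gen_preimage:
  assumes "module scale" and T: "module.subspace free_scale T" "tensor_rel scale \<phi> \<subseteq> T"
  shows "module.subspace scale {v. free_gen v \<in> T}"
proof -
  interpret V: module scale by fact
  interpret F: module "free_scale :: 's \<Rightarrow> ('v \<Rightarrow>\<^sub>0 's::comm_ring_1) \<Rightarrow> _" by (rule module_free_scale)
  have add: "free_gen (v + w) - free_gen v - free_gen w \<in> T" for v w
    using T(2) free_gen_add_in_tensor_rel by blast
  have scale: "free_gen (scale r v) - free_scale (\<phi> r) (free_gen v) \<in> T" for r v
    using T(2) free_gen_scale_in_tensor_rel by blast
  show ?thesis
  proof (rule V.subspaceI)
    show "0 \<in> {v. free_gen v \<in> T}"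
      using F.subspace_neg[OF T(1) add[of 0 0]] by simp
  next
    fix v w assume "v \<in> {v. free_gen v \<in> T}" "w \<in> {v. free_gen v \<in> T}"
    then have "(free_gen (v + w) - free_gen v - free_gen w) + free_gen v + free_gen w \<in> T"
      by (intro F.subspace_add[OF T(1)] add) auto
    then show "v + w \<in> {v. free_gen v \<in> T}" by simp
  next
    fix r v assume "v \<in> {v. free_gen v \<in> T}"
    then have "(free_gen (scale r v) - free_scale (\<phi> r) (free_gen v)) + free_scale (\<phi> r) (free_gen v) \<in> T"
      by (intro F.subspace_add[OF T(1)] F.subspace_scale[OF T(1)] scale) auto
    then show "scale r v \<in> {v. free_gen v \<in> T}" by simp
  qed
qed

context
  fixes n :: nat
    and scale :: "'r::comm_ring_1 \<Rightarrow> 'v::ab_group_add \<Rightarrow> 'v"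
    and act :: "'f::field mat \<Rightarrow> 'v \<Rightarrow> 'v"
    and \<chi> :: "'f \<Rightarrow> 'r" and \<chi>' :: "'f \<Rightarrow> 's::comm_ring_1"
    and \<phi> :: "'r \<Rightarrow> 's"
  assumes module_scale: "module scale"
    and compat: "\<And>a. \<phi> (\<chi> a) = \<chi>' a"
begin

abbreviation base_change_rel :: "('v \<Rightarrow>\<^sub>0 's) set" where
  "base_change_rel \<equiv> coinv_rel n free_scale (free_act act) \<chi>' (tensor_rel scale \<phi>)"

interpretation V: module scale by (rule module_scale)
interpretation F: module "free_scale :: 's \<Rightarrow> ('v \<Rightarrow>\<^sub>0 's) \<Rightarrow> _" by (rule module_free_scale)

lemma subspace_base_change_rel: "F.subspace base_change_rel"
  by (rule subspace_coinv_rel[OF module_free_scale])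

lemma tensor_rel_subset_base_change_rel: "tensor_rel scale \<phi> \<subseteq> base_change_rel"
  by (rule subset_coinv_rel[OF module_free_scale])

lemma free_gen_in_base_change_rel:
  assumes "c \<in> coinv_rel n scale act \<chi> {0}"
  shows "free_gen c \<in> base_change_rel"
proof -
  let ?P = "{v. free_gen v \<in> base_change_rel}"
  have "act u v - scale (\<chi> (superdiag n u)) v \<in> ?P" if u: "u \<in> unip n" for u v
  proof -
    let ?w = "scale (\<chi> (superdiag n u)) v" and ?c = "\<chi>' (superdiag n u)"
    have add: "free_gen ((act u v - ?w) + ?w) - free_gen (act u v - ?w) - free_gen ?w \<in> base_change_rel"
      using tensor_rel_subset_base_change_rel free_gen_add_in_tensor_rel by blast
    have scale: "free_gen ?w - free_scale ?c (free_gen v) \<in> base_change_rel"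
      using free_gen_scale_in_tensor_rel[of scale "\<chi> (superdiag n u)" v \<phi>]
      unfolding compat by (rule subsetD[OF tensor_rel_subset_base_change_rel])
    have twisted: "free_act act u (free_gen v) - free_scale ?c (free_gen v) \<in> base_change_rel"
      by (rule twisted_in_coinv_rel[OF module_free_scale u])
    have "free_gen (act u v - ?w) =
        (free_act act u (free_gen v) - free_scale ?c (free_gen v))
        - (free_gen ?w - free_scale ?c (free_gen v))
        - (free_gen ((act u v - ?w) + ?w) - free_gen (act u v - ?w) - free_gen ?w)"
      by (simp add: free_act_single)
    also have "\<dots> \<in> base_change_rel"
      by (rule F.subspace_diff[OF subspace_base_change_rel
            F.subspace_diff[OF subspace_base_change_rel twisted scale] add])
    finally show ?thesis by simp
  qed
  moreover have P: "V.subspace ?P"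
    by (rule subspace_free_gen_preimage[OF module_scale subspace_base_change_rel
          tensor_rel_subset_base_change_rel])
  ultimately have "coinv_rel n scale act \<chi> {0} \<subseteq> ?P"
    unfolding coinv_rel_def[of n scale act \<chi> "{0}"]
    using V.subspace_0[OF P] by (intro V.span_minimal[OF _ P]) auto
  with assms show ?thesis by blast
qed

context
  fixes lam :: "'v \<Rightarrow> 'r"
  assumes hom: "ring_hom \<phi>"
    and lam: "whittaker_functional n scale act \<chi> {0} lam"
begin

interpretation lam: module_hom scale "(*)" lam
  using lam unfolding whittaker_functional_def by blast

lemma diff_free_lift_in_base_change_rel:
  assumes e: "lam e = 1"
  shows "x - free_scale (free_lift (*) (\<lambda>v. \<phi> (lam v)) x) (free_gen e) \<in> base_change_rel"
proof -
  let ?L = "free_lift (*) (\<lambda>v. \<phi> (lam v))"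
  let ?D = "\<lambda>x. x - free_scale (?L x) (free_gen e)"
  interpret FF: module_pair free_scale free_scale
    by (rule module_pair.intro[OF module_free_scale module_free_scale])
  interpret D: module_hom free_scale free_scale ?D
    by (intro FF.module_hom_sub F.module_hom_ident FF.module_hom_compose_scale
        module_hom_free_lift module_mult)
  have "free_gen v - free_scale (\<phi> (lam v)) (free_gen e) \<in> base_change_rel" for v
  proof -
    let ?w = "v - scale (lam v) e"
    have "lam ?w = 0"
      using e by (simp add: lam.diff lam.scale)
    then have "free_gen ?w \<in> base_change_rel"
      using lam unfolding whittaker_functional_def by (intro free_gen_in_base_change_rel) auto
    moreover have "free_gen (?w + scale (lam v) e) - free_gen ?w - free_gen (scale (lam v) e)
        \<in> base_change_rel"
      using tensor_rel_subset_base_change_rel free_gen_add_in_tensor_rel by blast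
    moreover have "free_gen (scale (lam v) e) - free_scale (\<phi> (lam v)) (free_gen e) \<in> base_change_rel"
      using tensor_rel_subset_base_change_rel free_gen_scale_in_tensor_rel by blast
    ultimately have "free_gen ?w
        + (free_gen (?w + scale (lam v) e) - free_gen ?w - free_gen (scale (lam v) e))
        + (free_gen (scale (lam v) e) - free_scale (\<phi> (lam v)) (free_gen e)) \<in> base_change_rel"
      by (intro F.subspace_add subspace_base_change_rel)
    then show ?thesis
      by simp
  qed
  then have "range free_gen \<subseteq> ?D -` base_change_rel"
    by (auto simp: free_lift_single module_mult)
  then have "F.span (range free_gen) \<subseteq> ?D -` base_change_rel"
    by (intro F.span_minimal D.subspace_vimage subspace_base_change_rel)
  then show ?thesis
    unfolding span_free_gen by blast
qed

lemma base_change_rel_subset_kernel: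
  "base_change_rel \<subseteq> {x. free_lift (*) (\<lambda>v. \<phi> (lam v)) x = 0}"
proof -
  let ?L = "free_lift (*) (\<lambda>v. \<phi> (lam v))"
  interpret L: module_hom free_scale "(*)" ?L
    by (rule module_hom_free_lift[OF module_mult])
  have "tensor_rel scale \<phi> \<subseteq> {x. ?L x = 0}"
    unfolding tensor_rel_def
    using hom unfolding ring_hom_def
    by (intro F.span_minimal L.subspace_kernel)
      (auto simp: L.diff free_lift_single module_mult lam.add lam.scale)
  moreover have "free_act act u x - free_scale (\<chi>' (superdiag n u)) x \<in> {x. ?L x = 0}"
    if "u \<in> unip n" for u x
    using whittaker_functional_unip[OF lam that] hom
    by (simp add: L.diff L.scale free_lift_free_act[OF module_mult] free_lift_mult_left
        compat ring_hom_def)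
  ultimately show ?thesis
    unfolding coinv_rel_def by (intro F.span_minimal L.subspace_kernel Un_least) blast+
qed

lemma whittaker_functional_free_lift:
  "whittaker_functional n free_scale (free_act act) \<chi>' (tensor_rel scale \<phi>)
     (free_lift (*) (\<lambda>v. \<phi> (lam v)))"
proof -
  let ?L = "free_lift (*) (\<lambda>v. \<phi> (lam v))"
  obtain e where e: "lam e = 1"
    using lam unfolding whittaker_functional_def by (metis surjD)
  have "?L (Poly_Mapping.single e r) = r" for r
    using e hom by (simp add: free_lift_single module_mult ring_hom_def)
  then have "surj ?L"
    by (metis surjI)
  moreover have "{x. ?L x = 0} \<subseteq> base_change_rel"
  proof
    fix x assume "x \<in> {x. ?L x = 0}"
    then show "x \<in> base_change_rel"
      using diff_free_lift_in_base_change_rel[OF e, of x] by simp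
  qed
  ultimately show ?thesis
    unfolding whittaker_functional_def
    using base_change_rel_subset_kernel module_hom_free_lift[OF module_mult] by blast
qed

end

end

theorem lemma2p13:
  fixes p n :: nat
    and \<psi> :: "'f::{field,finite} \<Rightarrow> complex"
    and \<iota> :: "complex \<Rightarrow> 'r::comm_ring_1"
    and \<iota>' :: "complex \<Rightarrow> 'r2::comm_ring_1"
    and \<phi> :: "'r \<Rightarrow> 'r2"
    and scale :: "'r \<Rightarrow> 'v::ab_group_add \<Rightarrow> 'v"
    and act :: "'f mat \<Rightarrow> 'v \<Rightarrow> 'v"
  assumes "prime p"
    and "CHAR('f) = p"
    and "add_char p \<psi>"
    and "Zp_algebra p \<iota>"
    and "Zp_algebra p \<iota>'"
    and "noetherian_ring TYPE('r)"
    and "noetherian_ring TYPE('r2)"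
    and "ring_hom \<phi>"
    and "\<forall>x\<in>Zp p. \<phi> (\<iota> x) = \<iota>' x"
    and "RG_module n scale act"
    and "whittaker_type n scale act (\<iota> \<circ> \<psi>) {0}"
  shows "whittaker_type n free_scale (free_act act) (\<iota>' \<circ> \<psi>) (tensor_rel scale \<phi>)
    \<and> (\<forall>lam Lam. whittaker_functional n scale act (\<iota> \<circ> \<psi>) {0} lam
          \<and> whittaker_functional n free_scale (free_act act) (\<iota>' \<circ> \<psi>) (tensor_rel scale \<phi>) Lam
        \<longrightarrow> whittaker_model n (free_act act) Lam
            = base_change_model \<phi> (whittaker_model n act lam))"
proof -
  have module_scale: "module scale"
    using \<open>RG_module n scale act\<close> unfolding RG_module_def by blast
  have compat: "\<phi> ((\<iota> \<circ> \<psi>) a) = (\<iota>' \<circ> \<psi>) a" for a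
    using \<open>add_char p \<psi>\<close> \<open>\<forall>x\<in>Zp p. \<phi> (\<iota> x) = \<iota>' x\<close> unfolding add_char_def by simp
  note base_change = whittaker_functional_free_lift[where \<chi> = "\<iota> \<circ> \<psi>" and \<chi>' = "\<iota>' \<circ> \<psi>",
      OF module_scale compat \<open>ring_hom \<phi>\<close>]
  obtain lam where "whittaker_functional n scale act (\<iota> \<circ> \<psi>) {0} lam"
    using \<open>whittaker_type n scale act (\<iota> \<circ> \<psi>) {0}\<close> unfolding whittaker_type_def by blast
  then have "whittaker_type n free_scale (free_act act) (\<iota>' \<circ> \<psi>) (tensor_rel scale \<phi>)"
    unfolding whittaker_type_def by (blast dest: base_change)
  moreover have "whittaker_model n (free_act act) Lam = base_change_model \<phi> (whittaker_model n act lam)"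
    if "whittaker_functional n scale act (\<iota> \<circ> \<psi>) {0} lam"
      and "whittaker_functional n free_scale (free_act act) (\<iota>' \<circ> \<psi>) (tensor_rel scale \<phi>) Lam"
    for lam Lam
  proof -
    have "whittaker_model n (free_act act) Lam
        = whittaker_model n (free_act act) (free_lift (*) (\<lambda>v. \<phi> (lam v)))"
      by (rule whittaker_model_indep[OF base_change[OF that(1)] that(2)
            module_hom.scale[OF module_hom_free_act]])
    also have "\<dots> = base_change_model \<phi> (whittaker_model n act lam)"
      by (rule whittaker_model_free_lift[OF \<open>ring_hom \<phi>\<close>])
    finally show ?thesis .
  qed
  ultimately show ?thesis
    by blast
qed

end
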